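(* Let $R,S$ be finite nonempty sets, $k$ a positive integer, $p_r>0$ ($r\in R$), $T=\sum_{r\in R}p_r$, $d_{r,s}\ge0$, and $\kappa<0$. Let $F$ be the set of $(\mathbf x,\mathbf y)$ with $x_s,y_{r,s}\in\{0,1\}$, $\sum_{s\in S}x_s=k$, $y_{r,s}\le x_s$, and $\sum_{s\in S}y_{r,s}=1$ for all $r$. For $\mathbf y$ let $\overline{\mathcal K}(\mathbf y)=\sum_{r\in R}\sum_{s\in S}p_ry_{r,s}e^{-\kappa d_{r,s}}$ and $\mathcal K(\mathbf y)=-\frac1\kappa\ln\left(\frac1T\overline{\mathcal K}(\mathbf y)\right)$. Let $U\subseteq S$ with $|S\setminus U|\ge k$, and $c_s\ge0$ for $s\in U$; set $\sigma(\mathbf x)=\sum_{s\in U}c_sx_s$. Let $\hat{\mathcal K}\in\mathbb R$ and let $(\mathbf x^*,\mathbf y^*,v^*,q^* )$ be optimal for \[ \text{(KPL}^p)\quad \min\ \overline{\mathcal K}(\mathbf y)+Te^{-\kappa\hat{\mathcal K}}(v-1)\ \text{ s.t. } (\mathbf x,\mathbf y)\in F,\ v\ge e^{q},\ q=-\kappa\,\sigma(\mathbf x), \] with $\mathcal K^*=\mathcal K(\mathbf y^* )$. Let $(\mathbf x^{all},\mathbf y^{all})$ be optimal for (KPL)$^{all}$: $\min\{\overline{\mathcal K}(\mathbf y):(\mathbf x,\mathbf y)\in F\}$, and $(\mathbf x^{rem},\mathbf y^{rem})$ optimal for (KPL)$^{rem}$: $\min\{\overline{\mathcal K}(\mathbf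 y):(\mathbf x,\mathbf y)\in F,\ x_s=0\ \forall s\in U\}$. Let $\mathcal K^{all}=\mathcal K(\mathbf y^{all})$ and $\mathcal K^{rem}=\mathcal K(\mathbf y^{rem})$. Then \[ \mathcal K^{all}\le\mathcal K^*\le\mathcal K^{rem}. \]
   Context: (KPL)$^{all}$ is the unpenalized Kolm–Pollak linear facility location model with all potential locations; (KPL)$^{rem}$ is the same model with the penalized locations $U$ removed; the same $\kappa$ (i.e. the same scaling parameter $\alpha$, with $\kappa=\alpha\epsilon$) is used in all three models. *)

theory Defs
  imports Complex_Main
begin

definition feasF :: "'r set \<Rightarrow> 's set \<Rightarrow> nat \<Rightarrow> ('s \<Rightarrow> real) \<Rightarrow> ('r \<Rightarrow> 's \<Rightarrow> real) \<Rightarrow> bool" where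
  "feasF R S k x y \<longleftrightarrow>
     (\<forall>s\<in>S. x s \<in> {0, 1}) \<and> (\<forall>r\<in>R. \<forall>s\<in>S. y r s \<in> {0, 1}) \<and>
     (\<Sum>s\<in>S. x s) = real k \<and>
     (\<forall>r\<in>R. \<forall>s\<in>S. y r s \<le> x s) \<and>
     (\<forall>r\<in>R. (\<Sum>s\<in>S. y r s) = 1)"

definition Kbar :: "'r set \<Rightarrow> 's set \<Rightarrow> ('r \<Rightarrow> real) \<Rightarrow> ('r \<Rightarrow> 's \<Rightarrow> real) \<Rightarrow> real \<Rightarrow> ('r \<Rightarrow> 's \<Rightarrow> real) \<Rightarrow> real" where
  "Kbar R S p d \<kappa> y = (\<Sum>r\<in>R. \<Sum>s\<in>S. p r * y r s * exp (- \<kappa> * d r s))"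

definition KP :: "'r set \<Rightarrow> 's set \<Rightarrow> ('r \<Rightarrow> real) \<Rightarrow> ('r \<Rightarrow> 's \<Rightarrow> real) \<Rightarrow> real \<Rightarrow> ('r \<Rightarrow> 's \<Rightarrow> real) \<Rightarrow> real" where
  "KP R S p d \<kappa> y = - (1 / \<kappa>) * ln ((1 / (\<Sum>r\<in>R. p r)) * Kbar R S p d \<kappa> y)"

definition sigma :: "'s set \<Rightarrow> ('s \<Rightarrow> real) \<Rightarrow> ('s \<Rightarrow> real) \<Rightarrow> real" where
  "sigma U c x = (\<Sum>s\<in>U. c s * x s)"

definition feasP :: "'r set \<Rightarrow> 's set \<Rightarrow> nat \<Rightarrow> 's set \<Rightarrow> ('s \<Rightarrow> real) \<Rightarrow> real
    \<Rightarrow> ('s \<Rightarrow> real) \<Rightarrow> ('r \<Rightarrow> 's \<Rightarrow> real) \<Rightarrow> real \<Rightarrow> real \<Rightarrow> bool" where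
  "feasP R S k U c \<kappa> x y v q \<longleftrightarrow> feasF R S k x y \<and> v \<ge> exp q \<and> q = - \<kappa> * sigma U c x"

definition objP :: "'r set \<Rightarrow> 's set \<Rightarrow> ('r \<Rightarrow> real) \<Rightarrow> ('r \<Rightarrow> 's \<Rightarrow> real) \<Rightarrow> real \<Rightarrow> real
    \<Rightarrow> ('r \<Rightarrow> 's \<Rightarrow> real) \<Rightarrow> real \<Rightarrow> real" where
  "objP R S p d \<kappa> Khat y v =
     Kbar R S p d \<kappa> y + (\<Sum>r\<in>R. p r) * exp (- \<kappa> * Khat) * (v - 1)"

end

theory Submission
  imports Defs
begin

text \<open>Since \<open>-1/\<kappa> > 0\<close> and \<open>ln\<close> is monotone, \<open>KP\<close> is a monotone function of the positive
  quantity \<open>Kbar\<close>, so it suffices to compare the \<open>Kbar\<close>-values. The penalized optimum is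
  feasible for (KPL)\<open>\<^sup>a\<^sup>l\<^sup>l\<close>, which gives the lower bound. For the upper bound, \<open>\<kappa> < 0\<close> and
  \<open>c \<ge> 0\<close> force \<open>v \<ge> 1\<close>, so the penalty term of (KPL)\<open>\<^sup>p\<close> is nonnegative, while the optimum of
  (KPL)\<open>\<^sup>r\<^sup>e\<^sup>m\<close> together with \<open>v = 1\<close>, \<open>q = 0\<close> is feasible for (KPL)\<open>\<^sup>p\<close> with zero penalty.
  The hypotheses \<open>S \<noteq> {}\<close>, \<open>k > 0\<close>, \<open>d \<ge> 0\<close> and \<open>card (S - U) \<ge> k\<close> only ensure that the
  three optima exist.\<close>

lemma Kbar_pos:
  assumes "finite R" "R \<noteq> {}" "finite S" "\<forall>r\<in>R. p r > 0" "feasF R S k x y"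
  shows "Kbar R S p d \<kappa> y > 0"
  unfolding Kbar_def
proof (rule sum_pos[OF assms(1,2)])
  fix r assume r: "r \<in> R"
  have y01: "\<forall>s\<in>S. y r s \<in> {0, 1}" and row: "(\<Sum>s\<in>S. y r s) = 1"
    using assms(5) r unfolding feasF_def by auto
  obtain s where s: "s \<in> S" "y r s = 1"
    using row y01 by (metis insertE singletonD sum.neutral zero_neq_one)
  have nonneg: "\<forall>t\<in>S. p r * y r t * exp (- \<kappa> * d r t) \<ge> 0"
    using y01 assms(4) r by (auto simp: less_imp_le)
  have "0 < p r * y r s * exp (- \<kappa> * d r s)"
    using s assms(4) r by simp
  also have "\<dots> \<le> (\<Sum>t\<in>S. p r * y r t * exp (- \<kappa> * d r t))"
    using nonneg s assms(3) by (intro member_le_sum) auto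
  finally show "(\<Sum>t\<in>S. p r * y r t * exp (- \<kappa> * d r t)) > 0" .
qed

lemma KP_mono:
  assumes "finite R" "R \<noteq> {}" "\<forall>r\<in>R. p r > 0" "\<kappa> < 0"
    and "Kbar R S p d \<kappa> y1 > 0" "Kbar R S p d \<kappa> y1 \<le> Kbar R S p d \<kappa> y2"
  shows "KP R S p d \<kappa> y1 \<le> KP R S p d \<kappa> y2"
proof -
  have "(\<Sum>r\<in>R. p r) > 0"
    using assms(1-3) by (simp add: sum_pos)
  then have "ln ((1 / (\<Sum>r\<in>R. p r)) * Kbar R S p d \<kappa> y1)
      \<le> ln ((1 / (\<Sum>r\<in>R. p r)) * Kbar R S p d \<kappa> y2)"
    using assms(5,6) by (simp add: divide_right_mono)
  moreover have "- (1 / \<kappa>) > 0"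
    using assms(4) by simp
  ultimately show ?thesis
    unfolding KP_def by (metis mult_left_mono less_imp_le)
qed

lemma sigma_nonneg:
  assumes "\<forall>s\<in>U. c s \<ge> 0" "\<forall>s\<in>U. x s \<ge> 0"
  shows "sigma U c x \<ge> 0"
  unfolding sigma_def using assms by (simp add: sum_nonneg)

lemma feasP_imp_feasF:
  "feasP R S k U c \<kappa> x y v q \<Longrightarrow> feasF R S k x y"
  unfolding feasP_def by simp

lemma feasP_one_le:
  assumes "feasP R S k U c \<kappa> x y v q" "\<kappa> < 0" "U \<subseteq> S" "\<forall>s\<in>U. c s \<ge> 0"
  shows "1 \<le> v"
proof -
  have "\<forall>s\<in>U. x s \<ge> 0"
    using assms(1,3) unfolding feasP_def feasF_def by fastforce
  then have "sigma U c x \<ge> 0"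
    using assms(4) by (intro sigma_nonneg)
  then have "q \<ge> 0"
    using assms(1,2) unfolding feasP_def by (simp add: mult_nonpos_nonneg)
  then show ?thesis
    using assms(1) unfolding feasP_def by (meson one_le_exp_iff order_trans)
qed

lemma feasP_if_vanishing_on_penalized:
  assumes "feasF R S k x y" "\<forall>s\<in>U. x s = 0"
  shows "feasP R S k U c \<kappa> x y 1 0"
  using assms unfolding feasP_def sigma_def by simp

lemma objP_at_one: "objP R S p d \<kappa> Khat y 1 = Kbar R S p d \<kappa> y"
  unfolding objP_def by simp

lemma Kbar_le_objP:
  assumes "\<forall>r\<in>R. p r > 0" "1 \<le> v"
  shows "Kbar R S p d \<kappa> y \<le> objP R S p d \<kappa> Khat y v"
proof -
  have "(\<Sum>r\<in>R. p r) \<ge> 0"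
    using assms(1) by (simp add: sum_nonneg less_imp_le)
  then show ?thesis
    unfolding objP_def using assms(2) by simp
qed

theorem proposition2:
  fixes R :: "'r set" and S :: "'s set" and k :: nat
    and p :: "'r \<Rightarrow> real" and d :: "'r \<Rightarrow> 's \<Rightarrow> real" and \<kappa> :: real
    and U :: "'s set" and c :: "'s \<Rightarrow> real" and Khat :: real
    and xs :: "'s \<Rightarrow> real" and ys :: "'r \<Rightarrow> 's \<Rightarrow> real" and vs qs :: real
    and xall :: "'s \<Rightarrow> real" and yall :: "'r \<Rightarrow> 's \<Rightarrow> real"
    and xrem :: "'s \<Rightarrow> real" and yrem :: "'r \<Rightarrow> 's \<Rightarrow> real"
  assumes "finite R" "R \<noteq> {}" "finite S" "S \<noteq> {}" "k > 0"
    and "\<forall>r\<in>R. p r > 0"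
    and "\<forall>r\<in>R. \<forall>s\<in>S. d r s \<ge> 0"
    and "\<kappa> < 0"
    and "U \<subseteq> S" "card (S - U) \<ge> k"
    and "\<forall>s\<in>U. c s \<ge> 0"
    and opt_p: "feasP R S k U c \<kappa> xs ys vs qs"
      "\<forall>x y v q. feasP R S k U c \<kappa> x y v q \<longrightarrow>
          objP R S p d \<kappa> Khat ys vs \<le> objP R S p d \<kappa> Khat y v"
    and opt_all: "feasF R S k xall yall"
      "\<forall>x y. feasF R S k x y \<longrightarrow> Kbar R S p d \<kappa> yall \<le> Kbar R S p d \<kappa> y"
    and opt_rem: "feasF R S k xrem yrem" "\<forall>s\<in>U. xrem s = 0"
      "\<forall>x y. feasF R S k x y \<and> (\<forall>s\<in>U. x s = 0) \<longrightarrow> Kbar R S p d \<kappa> yrem \<le> Kbar R S p d \<kappa> y"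
  shows "KP R S p d \<kappa> yall \<le> KP R S p d \<kappa> ys \<and> KP R S p d \<kappa> ys \<le> KP R S p d \<kappa> yrem"
proof
  have feas_s: "feasF R S k xs ys"
    using opt_p(1) by (rule feasP_imp_feasF)
  have "Kbar R S p d \<kappa> yall \<le> Kbar R S p d \<kappa> ys"
    using opt_all(2) feas_s by blast
  then show "KP R S p d \<kappa> yall \<le> KP R S p d \<kappa> ys"
    by (rule KP_mono[OF assms(1,2,6,8) Kbar_pos[OF assms(1-3,6) opt_all(1)]])
next
  have "1 \<le> vs"
    using opt_p(1) assms(8,9,11) by (rule feasP_one_le)
  then have "Kbar R S p d \<kappa> ys \<le> objP R S p d \<kappa> Khat ys vs"
    using assms(6) by (intro Kbar_le_objP)
  also have "\<dots> \<le> objP R S p d \<kappa> Khat yrem 1"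
    using opt_p(2) feasP_if_vanishing_on_penalized[OF opt_rem(1,2)] by blast
  also have "\<dots> = Kbar R S p d \<kappa> yrem"
    by (rule objP_at_one)
  finally show "KP R S p d \<kappa> ys \<le> KP R S p d \<kappa> yrem"
    by (rule KP_mono[OF assms(1,2,6,8) Kbar_pos[OF assms(1-3,6) feasP_imp_feasF[OF opt_p(1)]]])
qed

end
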